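(* Let $G=(V,E,s)$ be a flow graph and let $D$ be its dominator tree, with $t(v)$ denoting the parent of a vertex $v\neq s$ in $D$. (i) If $G'$ is obtained from $G$ by inserting an edge, then $D$ still has the sibling property with respect to $G'$: for any two siblings $v,w$ in $D$, $v$ does not dominate $w$ in $G'$. (An insertion may, however, violate the parent property of $D$.) (ii) If $G'=(V,E',s)$ is obtained from $G$ by deleting an edge, then $D$ still has the parent property with respect to $G'$: for every edge $(v,w)\in E'$ such that $v$ is reachable from $s$ in $G'$, $v$ is a descendant of $t(w)$ in $D$. (A deletion may, however, violate the sibling property of $D$.)
   Context: A flow graph $G=(V,E,s)$ is a directed graph with a distinguished start vertex $s$. A vertex is reachable if there is a path from $s$ to it. For reachable vertices, $w$ dominates $v$ if every path from $s$ to $v$ contains $w$. The immediate dominator $d(v)$ of a reachable $v\neq s$ is the proper dominator of $v$ dominated by all other proper dominators of $v$; the dominator tree $D$ is the tree on the reachable vertices rooted at $s$ in which the parent of each $v\neq s$ is $d(v)$. For a tree $T$ rooted at $s$ on the reachable vertices with parent function $t$: $T$ has the parent property if for every edge $(v,w)$ with $v$ reachable, $v$ is a descendant of $t(w)$ in $T$; $T$ has the sibling property if for all siblings $v,w$ in $T$, $v$ does not dominate $w$. *)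

theory Defs
  imports Main
begin

definition flow_graph :: "'a set \<Rightarrow> ('a \<times> 'a) set \<Rightarrow> 'a \<Rightarrow> bool" where
  "flow_graph V E s \<longleftrightarrow> finite V \<and> E \<subseteq> V \<times> V \<and> s \<in> V"

definition reachable :: "('a \<times> 'a) set \<Rightarrow> 'a \<Rightarrow> 'a \<Rightarrow> bool" where
  "reachable E s v \<longleftrightarrow> (s, v) \<in> E\<^sup>*"

definition is_path :: "('a \<times> 'a) set \<Rightarrow> 'a list \<Rightarrow> 'a \<Rightarrow> 'a \<Rightarrow> bool" where
  "is_path E xs u v \<longleftrightarrow> xs \<noteq> [] \<and> hd xs = u \<and> last xs = v \<and>
     (\<forall>i. Suc i < length xs \<longrightarrow> (xs ! i, xs ! Suc i) \<in> E)"

definition dominates :: "('a \<times> 'a) set \<Rightarrow> 'a \<Rightarrow> 'a \<Rightarrow> 'a \<Rightarrow> bool" where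
  "dominates E s w v \<longleftrightarrow> reachable E s w \<and> reachable E s v \<and>
     (\<forall>xs. is_path E xs s v \<longrightarrow> w \<in> set xs)"

definition is_idom :: "('a \<times> 'a) set \<Rightarrow> 'a \<Rightarrow> 'a \<Rightarrow> 'a \<Rightarrow> bool" where
  "is_idom E s w v \<longleftrightarrow> w \<noteq> v \<and> dominates E s w v \<and>
     (\<forall>u. u \<noteq> v \<and> dominates E s u v \<longrightarrow> dominates E s u w)"

definition idom :: "('a \<times> 'a) set \<Rightarrow> 'a \<Rightarrow> 'a \<Rightarrow> 'a" where
  "idom E s v = (THE w. is_idom E s w v)"

definition dom_tree :: "('a \<times> 'a) set \<Rightarrow> 'a \<Rightarrow> ('a \<times> 'a) set" where
  "dom_tree E s = {(idom E s v, v) | v. reachable E s v \<and> v \<noteq> s}"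

definition dom_descendant :: "('a \<times> 'a) set \<Rightarrow> 'a \<Rightarrow> 'a \<Rightarrow> 'a \<Rightarrow> bool" where
  "dom_descendant E s x u \<longleftrightarrow> (u, x) \<in> (dom_tree E s)\<^sup>*"

definition dom_siblings :: "('a \<times> 'a) set \<Rightarrow> 'a \<Rightarrow> 'a \<Rightarrow> 'a \<Rightarrow> bool" where
  "dom_siblings E s v w \<longleftrightarrow> v \<noteq> w \<and> reachable E s v \<and> reachable E s w \<and>
     v \<noteq> s \<and> w \<noteq> s \<and> idom E s v = idom E s w"

definition sibling_property :: "('a \<times> 'a) set \<Rightarrow> 'a \<Rightarrow> ('a \<times> 'a) set \<Rightarrow> bool" where
  "sibling_property E s E' \<longleftrightarrow>
     (\<forall>v w. dom_siblings E s v w \<longrightarrow> \<not> dominates E' s v w)"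

text \<open>Parent property of D (of (E,s)) w.r.t. (E',s); t(s) is undefined, so w \<noteq> s.\<close>
definition parent_property :: "('a \<times> 'a) set \<Rightarrow> 'a \<Rightarrow> ('a \<times> 'a) set \<Rightarrow> bool" where
  "parent_property E s E' \<longleftrightarrow>
     (\<forall>v w. (v, w) \<in> E' \<and> reachable E' s v \<and> w \<noteq> s \<longrightarrow>
        dom_descendant E s v (idom E s w))"

end

theory Submission
  imports Defs
begin

text \<open>Adding edges can only destroy dominance between vertices reachable before: every old
  path is still a path. So if siblings v, w satisfied v dom w after an insertion, v would
  already be a proper dominator of w in G, hence a dominator of t(w) = t(v), which is absurd.
  Removing edges keeps every surviving edge (v, w) with v reachable an edge of G, and t(w),
  lying on every path to w that ends with this edge, dominates v in G; dominators are
  ancestors in D.\<close>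

lemma is_path_iff_successively:
  "is_path E xs u v \<longleftrightarrow> xs \<noteq> [] \<and> hd xs = u \<and> last xs = v \<and>
     successively (\<lambda>a b. (a, b) \<in> E) xs"
  unfolding is_path_def successively_conv_nth by blast

lemma is_path_singleton [simp]: "is_path E [x] u v \<longleftrightarrow> u = x \<and> v = x"
  by (auto simp: is_path_iff_successively)

lemma is_path_Cons_Cons [simp]:
  "is_path E (x # y # ys) u v \<longleftrightarrow> u = x \<and> (x, y) \<in> E \<and> is_path E (y # ys) y v"
  by (auto simp: is_path_iff_successively)

lemma is_path_snoc: "is_path E xs u v \<Longrightarrow> (v, w) \<in> E \<Longrightarrow> is_path E (xs @ [w]) u w"
  by (auto simp: is_path_iff_successively successively_append_iff)

lemma is_path_append_iff:
  "is_path E (ys @ x # zs) u v \<longleftrightarrow> is_path E (ys @ [x]) u x \<and> is_path E (x # zs) x v"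
proof -
  have "ys @ x # zs = (ys @ [x]) @ zs" by simp
  then show ?thesis
    by (cases zs) (auto simp: is_path_iff_successively successively_append_iff hd_append)
qed

lemma is_path_mono: "is_path E xs u v \<Longrightarrow> E \<subseteq> E' \<Longrightarrow> is_path E' xs u v"
  unfolding is_path_def by blast

lemma is_path_last_in_set: "is_path E xs u v \<Longrightarrow> v \<in> set xs"
  unfolding is_path_def by (metis last_in_set)

lemma is_path_imp_rtrancl: "is_path E xs u v \<Longrightarrow> (u, v) \<in> E\<^sup>*"
proof (induction xs arbitrary: u)
  case (Cons x xs)
  show ?case
  proof (cases xs)
    case Nil
    then show ?thesis using Cons.prems by simp
  next
    case (Cons y ys)
    then have "u = x" "(x, y) \<in> E" "is_path E xs y v" using Cons.prems by simp_all
    then show ?thesis using Cons.IH converse_rtrancl_into_rtrancl by metis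
  qed
qed (simp add: is_path_def)

lemma rtrancl_imp_is_path: "(u, v) \<in> E\<^sup>* \<Longrightarrow> \<exists>xs. is_path E xs u v"
proof (induction rule: rtrancl_induct)
  case base
  have "is_path E [u] u u" by simp
  then show ?case by blast
next
  case (step y z)
  then show ?case by (metis is_path_snoc)
qed

lemma reachable_iff_is_path: "reachable E s v \<longleftrightarrow> (\<exists>xs. is_path E xs s v)"
  unfolding reachable_def by (metis is_path_imp_rtrancl rtrancl_imp_is_path)

lemma dominates_refl: "reachable E s v \<Longrightarrow> dominates E s v v"
  unfolding dominates_def by (simp add: is_path_last_in_set)

lemma start_dominates: "reachable E s v \<Longrightarrow> dominates E s s v"
  unfolding dominates_def is_path_def reachable_def by (metis hd_in_set rtrancl.rtrancl_refl)

lemma dominates_start_imp_eq: "dominates E s d s \<Longrightarrow> d = s"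
  unfolding dominates_def by (metis is_path_singleton empty_set set_ConsD empty_iff)

lemma dominates_trans:
  assumes ab: "dominates E s a b" and bc: "dominates E s b c"
  shows "dominates E s a c"
  unfolding dominates_def
proof (intro conjI allI impI)
  show "reachable E s a" "reachable E s c" using ab bc by (simp_all add: dominates_def)
  fix xs assume path: "is_path E xs s c"
  with bc have "b \<in> set xs" by (simp add: dominates_def)
  then obtain ys zs where xs: "xs = ys @ b # zs" by (meson split_list)
  with path have "is_path E (ys @ [b]) s b" using is_path_append_iff by metis
  with ab have "a \<in> set (ys @ [b])" unfolding dominates_def by blast
  with xs show "a \<in> set xs" by auto
qed

lemma dominates_antisym:
  assumes ab: "dominates E s a b" and ba: "dominates E s b a"
  shows "a = b"
proof (rule ccontr)
  assume "a \<noteq> b"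
  obtain xs where xs: "is_path E xs s b"
    using ab reachable_iff_is_path unfolding dominates_def by metis
  obtain ys zs where "xs = ys @ b # zs" "b \<notin> set ys"
    using split_list_first[OF is_path_last_in_set[OF xs]] by blast
  with xs have to_b: "is_path E (ys @ [b]) s b" using is_path_append_iff by metis
  then have "a \<in> set ys" using ab \<open>a \<noteq> b\<close> unfolding dominates_def by auto
  then obtain as bs where ys: "ys = as @ a # bs" by (meson split_list)
  with to_b have "is_path E (as @ a # (bs @ [b])) s b" by simp
  then have "is_path E (as @ [a]) s a" using is_path_append_iff by metis
  moreover have "b \<notin> set (as @ [a])" using \<open>b \<notin> set ys\<close> \<open>a \<noteq> b\<close> ys by auto
  ultimately show False using ba unfolding dominates_def by blast
qed

text \<open>If a path to v visits a and then avoids b, any path to a can be continued to v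
  without meeting b.\<close>

lemma dominates_if_avoided_after:
  assumes bv: "dominates E s b v" and path: "is_path E (ys @ a # zs) s v"
    and avoid: "b \<notin> set (a # zs)"
  shows "dominates E s b a"
  unfolding dominates_def
proof (intro conjI allI impI)
  show "reachable E s b" using bv by (simp add: dominates_def)
  have to_a: "is_path E (ys @ [a]) s a" and from_a: "is_path E (a # zs) a v"
    using is_path_append_iff[THEN iffD1, OF path] by blast+
  from to_a show "reachable E s a" unfolding reachable_iff_is_path by blast
  fix xs assume xs: "is_path E xs s a"
  then have split: "xs = butlast xs @ [a]"
    by (metis append_butlast_last_id is_path_def)
  with xs from_a have "is_path E (butlast xs @ a # zs) s v"
    using is_path_append_iff[of E "butlast xs" a zs s v] by simp
  with bv have "b \<in> set (butlast xs @ a # zs)" unfolding dominates_def by blast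
  with avoid split show "b \<in> set xs" by (metis Un_iff set_append)
qed

lemma dominates_linear:
  assumes av: "dominates E s a v" and bv: "dominates E s b v"
  shows "dominates E s a b \<or> dominates E s b a"
proof (cases "a = b")
  case True
  have "reachable E s a" using av by (simp add: dominates_def)
  with True show ?thesis by (simp add: dominates_refl)
next
  case False
  obtain xs where path: "is_path E xs s v"
    using av unfolding dominates_def reachable_iff_is_path by blast
  with av have "a \<in> set xs" unfolding dominates_def by blast
  then obtain ys x zs where xs: "xs = ys @ x # zs" and x: "x \<in> {a, b}"
    and after: "\<forall>z \<in> set zs. z \<notin> {a, b}"
    using split_list_last_prop[of xs "\<lambda>z. z \<in> {a, b}"] by blast
  from x consider "x = a" | "x = b" by blast
  then show ?thesis
  proof cases
    case 1
    with False after have "b \<notin> set (a # zs)" by auto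
    moreover from path xs 1 have "is_path E (ys @ a # zs) s v" by simp
    ultimately have "dominates E s b a" using bv dominates_if_avoided_after by metis
    then show ?thesis ..
  next
    case 2
    with False after have "a \<notin> set (b # zs)" by auto
    moreover from path xs 2 have "is_path E (ys @ b # zs) s v" by simp
    ultimately have "dominates E s a b" using av dominates_if_avoided_after by metis
    then show ?thesis ..
  qed
qed

lemma finite_dominators: "finite {u. dominates E s u v}"
proof (cases "reachable E s v")
  case True
  then obtain xs where "is_path E xs s v" using reachable_iff_is_path by metis
  then have "{u. dominates E s u v} \<subseteq> set xs" unfolding dominates_def by blast
  then show ?thesis using finite_subset by blast
next
  case False
  then show ?thesis unfolding dominates_def by simp
qed

lemma card_dominators_less:
  assumes ab: "dominates E s a b" and "a \<noteq> b"
  shows "card {u. dominates E s u a} < card {u. dominates E s u b}"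
proof (rule psubset_card_mono[OF finite_dominators])
  have "reachable E s b" using ab by (simp add: dominates_def)
  then have "b \<in> {u. dominates E s u b}" by (simp add: dominates_refl)
  moreover have "b \<notin> {u. dominates E s u a}"
    using ab \<open>a \<noteq> b\<close> dominates_antisym by (metis mem_Collect_eq)
  moreover have "{u. dominates E s u a} \<subseteq> {u. dominates E s u b}"
    by (auto intro: dominates_trans[OF _ ab])
  ultimately show "{u. dominates E s u a} \<subset> {u. dominates E s u b}" by blast
qed

text \<open>The immediate dominator is the proper dominator with the most dominators.\<close>

lemma is_idom_idom:
  assumes v: "reachable E s v" "v \<noteq> s"
  shows "is_idom E s (idom E s v) v"
proof -
  let ?proper = "\<lambda>u. u \<noteq> v \<and> dominates E s u v"
  let ?depth = "\<lambda>u. card {x. dominates E s x u}"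
  have "?proper s" using v start_dominates by auto
  moreover have "\<forall>u. ?proper u \<longrightarrow> ?depth u < ?depth v"
    by (simp add: card_dominators_less)
  ultimately obtain d where d: "?proper d"
    and deepest: "\<And>u. ?proper u \<Longrightarrow> ?depth u \<le> ?depth d"
    using ex_has_greatest_nat[of ?proper s ?depth "?depth v"] by blast
  have idom_d: "is_idom E s d v"
    unfolding is_idom_def
  proof (intro conjI allI impI)
    show "d \<noteq> v" "dominates E s d v" using d by auto
    fix u assume u: "?proper u"
    show "dominates E s u d"
    proof (rule ccontr)
      assume not_ud: "\<not> dominates E s u d"
      have "reachable E s u" using u by (simp add: dominates_def)
      then have "d \<noteq> u" using not_ud dominates_refl by metis
      moreover have "dominates E s d u"
        using dominates_linear[of E s u v d] u d not_ud by simp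
      ultimately have "?depth d < ?depth u" using card_dominators_less by metis
      with deepest[OF u] show False by simp
    qed
  qed
  have "w = d" if w: "is_idom E s w v" for w
  proof -
    have "dominates E s w d" "dominates E s d w"
      using w idom_d unfolding is_idom_def by blast+
    then show ?thesis by (rule dominates_antisym)
  qed
  with idom_d show ?thesis
    unfolding idom_def using theI[of "\<lambda>w. is_idom E s w v" d] by blast
qed

lemma dominates_imp_dom_descendant:
  "dominates E s d v \<Longrightarrow> dom_descendant E s v d"
proof (induction "card {u. dominates E s u v}" arbitrary: v rule: less_induct)
  case less
  show ?case
  proof (cases "d = v")
    case True then show ?thesis by (simp add: dom_descendant_def)
  next
    case False
    have "v \<noteq> s" using less.prems False dominates_start_imp_eq by metis
    moreover have "reachable E s v" using less.prems by (simp add: dominates_def)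
    ultimately have v: "reachable E s v" "v \<noteq> s" by simp_all
    let ?p = "idom E s v"
    have p: "?p \<noteq> v" "dominates E s ?p v" "dominates E s d ?p"
      using is_idom_idom[OF v] False less.prems unfolding is_idom_def by auto
    have "dom_descendant E s ?p d"
      using less.hyps[OF card_dominators_less[OF p(2,1)] p(3)] .
    moreover have "(?p, v) \<in> dom_tree E s" unfolding dom_tree_def using v by blast
    ultimately show ?thesis unfolding dom_descendant_def by simp
  qed
qed

lemma proper_dominator_dominates_pred:
  assumes "dominates E s d w" "d \<noteq> w" "(v, w) \<in> E" "reachable E s v"
  shows "dominates E s d v"
  unfolding dominates_def
proof (intro conjI allI impI)
  show "reachable E s d" "reachable E s v" using assms by (simp_all add: dominates_def)
  fix xs assume "is_path E xs s v"
  then have "is_path E (xs @ [w]) s w" using \<open>(v, w) \<in> E\<close> by (rule is_path_snoc)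
  then have "d \<in> set (xs @ [w])" using \<open>dominates E s d w\<close> unfolding dominates_def by blast
  with \<open>d \<noteq> w\<close> show "d \<in> set xs" by simp
qed

lemma dominates_of_supergraph:
  assumes dom': "dominates E' s v w" and "E \<subseteq> E'" "reachable E s v" "reachable E s w"
  shows "dominates E s v w"
  unfolding dominates_def
proof (intro conjI allI impI)
  show "reachable E s v" "reachable E s w" by fact+
  fix xs assume "is_path E xs s w"
  then have "is_path E' xs s w" using \<open>E \<subseteq> E'\<close> by (rule is_path_mono)
  with dom' show "v \<in> set xs" by (simp add: dominates_def)
qed

lemma dom_siblings_not_dominates:
  assumes "dom_siblings E s v w"
  shows "\<not> dominates E s v w"
proof
  assume vw: "dominates E s v w"
  have v: "reachable E s v" "v \<noteq> s" "v \<noteq> w" and w: "reachable E s w" "w \<noteq> s"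
    and same_parent: "idom E s v = idom E s w"
    using assms unfolding dom_siblings_def by auto
  have "dominates E s v (idom E s w)"
    using is_idom_idom[OF w] vw v(3) unfolding is_idom_def by blast
  then have "dominates E s v (idom E s v)" by (simp add: same_parent)
  moreover have "dominates E s (idom E s v) v" "idom E s v \<noteq> v"
    using is_idom_idom[OF v(1,2)] unfolding is_idom_def by auto
  ultimately show False using dominates_antisym by metis
qed

lemma sibling_property_of_supergraph:
  assumes "E \<subseteq> E'"
  shows "sibling_property E s E'"
  unfolding sibling_property_def
proof (intro allI impI notI)
  fix v w assume sib: "dom_siblings E s v w" and dom': "dominates E' s v w"
  have "reachable E s v" "reachable E s w" using sib by (simp_all add: dom_siblings_def)
  with dom' have "dominates E s v w" by (rule dominates_of_supergraph[OF _ assms])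
  with dom_siblings_not_dominates[OF sib] show False by contradiction
qed

lemma parent_property_of_subgraph:
  assumes "E' \<subseteq> E"
  shows "parent_property E s E'"
  unfolding parent_property_def
proof (intro allI impI)
  fix v w assume vw: "(v, w) \<in> E' \<and> reachable E' s v \<and> w \<noteq> s"
  then have v: "reachable E s v" and edge: "(v, w) \<in> E"
    using assms rtrancl_mono[OF assms] unfolding reachable_def by auto
  then have "reachable E s w" unfolding reachable_def by simp
  with vw have "is_idom E s (idom E s w) w" by (simp add: is_idom_idom)
  then have "dominates E s (idom E s w) v"
    using proper_dominator_dominates_pred[OF _ _ edge v] unfolding is_idom_def by blast
  then show "dom_descendant E s v (idom E s w)" by (rule dominates_imp_dom_descendant)
qed

theorem proposition1:
  fixes V :: "'a set" and E :: "('a \<times> 'a) set" and s :: 'a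
  assumes "flow_graph V E s"
  shows "(\<forall>x y. x \<in> V \<and> y \<in> V \<longrightarrow> sibling_property E s (insert (x, y) E))
       \<and> (\<forall>e \<in> E. parent_property E s (E - {e}))"
  by (simp add: sibling_property_of_supergraph parent_property_of_subgraph subset_insertI)

end
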